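(* In the elastoplastic setting described in the context, let $(\mathbf{a},\mathbf{b},\mathbf{c})\in\mathbb{R}^{dM}\times\mathbb{R}^{LN}\times\mathbb{R}^{LN}$ be arbitrary and $\mathbf{H}\in\partial\mathbf{F}(\mathbf{a},\mathbf{b},\mathbf{c})$, written as $\mathbf{H}=\begin{pmatrix}\mathbf{A}&\mathbf{B}&\mathbf{0}\\ \mathbf{B}^\top&\mathbf{C}&\mathbf{D}\\ \mathbf{0}&\mathbf{X}&\mathbf{Y}\end{pmatrix}$ with $\mathbf{X}=\operatorname{diag}(\mathbf{X}_1,\dots,\mathbf{X}_N)$, $\mathbf{Y}=\operatorname{diag}(\mathbf{Y}_1,\dots,\mathbf{Y}_N)$. Then for each $i\in\{1,\dots,N\}$ there is $\tau_i\in[0,1]$ such that $$\mathbf{X}_i=\tau_i\,\varrho\,\mathbf{c}_i\otimes\frac{\mathbf{v}_{\varrho,i}}{|\mathbf{v}_{\varrho,i}|}-\varrho\,\sigma_i\,\mathbf{I}_{L\times L},\qquad \mathbf{Y}_i=\tau_i\Big(\mathbf{c}_i\otimes\frac{\mathbf{v}_{\varrho,i}}{|\mathbf{v}_{\varrho,i}|}+(|\mathbf{v}_{\varrho,i}|-\sigma_i)\mathbf{I}_{L\times L}\Big),$$ where $\mathbf{v}_{\varrho,i}:=\mathbf{c}_i+\varrho\mathbf{b}_i$. Specifically, if $|\mathbf{v}_{\varrho,i}|<\sigma_i$ then $\tau_i=0$ (i.e. $\mathbf{X}_i=-\varrho\sigma_i\mathbf{I}_{L\times L}$, $\mathbf{Y}_i=\mathbf{0}$),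 and if $|\mathbf{v}_{\varrho,i}|>\sigma_i$ then $\tau_i=1$.
   Context: Elastoplastic setting. Let $d\in\{2,3\}$, $\Omega\subset\mathbb{R}^d$ a bounded polygonal domain with Lipschitz boundary $\Gamma$, $\Gamma_D\subseteq\Gamma$ closed with positive surface measure, $\Gamma_N=\Gamma\setminus\Gamma_D$. $\mathbb{S}_{d,0}$ denotes the symmetric trace-free $d\times d$ matrices with Frobenius inner product $\mathbf{p}:\mathbf{q}=\sum p_{ij}q_{ij}$. $\mathbb{C},\mathbb{H}$ are fourth-order elasticity and hardening tensors with the usual symmetries, uniformly elliptic and bounded; $\sigma_y>0$ is a constant yield stress. $V=\{\mathbf{v}\in H^1(\Omega,\mathbb{R}^d):\mathbf{v}|_{\Gamma_D}=\mathbf{0}\}$, $\mathbf{f}\in V^*$, $\mathbf{g}\in H^{-1/2}(\Gamma_N,\mathbb{R}^d)$, $\ell(\mathbf{v})=\langle\mathbf{f},\mathbf{v}\rangle+\langle\mathbf{g},\mathbf{v}\rangle_{\Gamma_N}$, and $a((\mathbf{u},\mathbf{p}),(\mathbf{v},\mathbf{q}))=\int_\Omega\mathbb{C}(\boldsymbol\varepsilon(\mathbf{u})-\mathbf{p}):(\boldsymbol\varepsilon(\mathbf{v})-\mathbf{q})\,dx+\int_\Omega\mathbb{H}\mathbf{p}:\mathbf{q}\,dx$ with $\boldsymbol\varepsilon(\mathbf{u})=\tfrac12(\nabla\mathbf{u}+\nabla\mathbf{u}^\top)$. Let $\mathcal{T}_h$ be a locally quasi-uniform mesh of convex shape-regular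 quadrilaterals/hexahedra with bi/trilinear bijections $\mathbf{M}_T:[-1,1]^d\to T$, polynomial degrees $p_T\ge1$; $\mathbb{P}_p(\hat T)$ denotes polynomials of degree at most $p$ in each variable on $\hat T=[-1,1]^d$. $V_{hp}=\{\mathbf{v}\in V:\mathbf{v}|_T\circ\mathbf{M}_T\in\mathbb{P}_{p_T}(\hat T)^d\ \forall T\}$ with basis $\{\mathbf{e}_k\vartheta_i:k\le d,\,i\le M\}$. For each $T$, let $\hat{\mathbf{x}}_{k,T}$, $k=1,\dots,n_T:=p_T^d$, be the tensor-product Gauss points on $\hat T$ and $\hat\phi_{k,T}\in\mathbb{P}_{p_T-1}(\hat T)$ the Lagrange basis with $\hat\phi_{k,T}(\hat{\mathbf{x}}_{l,T})=\delta_{kl}$; $\phi_1,\dots,\phi_N$ ($N=\sum_Tn_T$, one-to-one numbering) equal $\hat\phi_{k,T}\circ\mathbf{M}_T^{-1}$ on $T$ and $0$ elsewhere. $D_i:=\int_\Omega\phi_i\,dx>0$, $\sigma_i:=D_i^{-1}\int_\Omega\sigma_y\phi_i\,dx$. $L:=\tfrac12(d-1)(d+2)$ and $\boldsymbol\Phi_1,\dots,\boldsymbol\Phi_L$ is the Frobenius-orthonormal basis of $\mathbb{S}_{d,0}$ given for $d=2$ by $\tfrac1{\sqrt2}\begin{pmatrix}1&0\\0&-1\end{pmatrix},\tfrac1{\sqrt2}\begin{pmatrix}0&1\\1&0\end{pmatrix}$ and for $d=3$ by $\tfrac1{\sqrt2}\operatorname{diag}(1,-1,0)$, $\tfrac1{\sqrt6}\operatorname{diag}(1,1,-2)$,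 and $\tfrac1{\sqrt2}(\mathbf{e}_1\mathbf{e}_2^\top+\mathbf{e}_2\mathbf{e}_1^\top)$, $\tfrac1{\sqrt2}(\mathbf{e}_1\mathbf{e}_3^\top+\mathbf{e}_3\mathbf{e}_1^\top)$, $\tfrac1{\sqrt2}(\mathbf{e}_2\mathbf{e}_3^\top+\mathbf{e}_3\mathbf{e}_2^\top)$. Matrices: $A_{d(i-1)+k,d(j-1)+l}=a((\mathbf{e}_l\vartheta_j,\mathbf{0}),(\mathbf{e}_k\vartheta_i,\mathbf{0}))$; $C_{L(i-1)+k,L(j-1)+l}=a((\mathbf{0},\boldsymbol\Phi_l\phi_i),(\mathbf{0},\boldsymbol\Phi_k\phi_j))$; $\mathbf{D}=\operatorname{diag}(D_1\mathbf{I}_{L\times L},\dots,D_N\mathbf{I}_{L\times L})$; $B_{d(i-1)+k,L(j-1)+l}=-a((\mathbf{0},\boldsymbol\Phi_l\phi_j),(\mathbf{e}_k\vartheta_i,\mathbf{0}))$ ($i\le M$, $j\le N$, $k\le d$, $l\le L$); $l_{d(i-1)+k}=-\ell(\mathbf{e}_k\vartheta_i)$. Fix $\varrho>0$. For $\mathbf{b},\mathbf{c}\in\mathbb{R}^{LN}$ let $\mathbf{b}_i=(b_{L(i-1)+1},\dots,b_{Li})^\top$, $\mathbf{c}_i$ analogously, $\mathbf{v}_{\varrho,i}=\mathbf{c}_i+\varrho\mathbf{b}_i$, and $\mathbf{S}_i(\mathbf{b}_i,\mathbf{c}_i)=\max\{\sigma_i,|\mathbf{v}_{\varrho,i}|\}\,\mathbf{c}_i-\sigma_i\mathbf{v}_{\varrho,i}\in\mathbb{R}^L$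 ($|\cdot|$ Euclidean norm). Then $\mathbf{F}(\mathbf{a},\mathbf{b},\mathbf{c})=(\mathbf{A}\mathbf{a}+\mathbf{B}\mathbf{b}+\mathbf{l},\ \mathbf{B}^\top\mathbf{a}+\mathbf{C}\mathbf{b}+\mathbf{D}\mathbf{c},\ \mathbf{S}_1(\mathbf{b}_1,\mathbf{c}_1),\dots,\mathbf{S}_N(\mathbf{b}_N,\mathbf{c}_N))$. $\partial\mathbf{F}$ is the Clarke subdifferential (convex hull of limits of Jacobians at nearby differentiability points); $\mathbf{x}\otimes\mathbf{y}=\mathbf{x}\mathbf{y}^\top$ is the dyadic product. *)

theory Defs
  imports "HOL-Analysis.Analysis"
begin

definition clarke_jacobian ::
  "('a::euclidean_space \<Rightarrow> 'b::euclidean_space) \<Rightarrow> 'a \<Rightarrow> ('a \<Rightarrow>\<^sub>L 'b) set" where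
  "clarke_jacobian F x = convex hull
     {J. \<exists>xs Js. (xs \<longlonglongrightarrow> x) \<and>
          (\<forall>k. (F has_derivative blinfun_apply (Js k)) (at (xs k))) \<and>
          (Js \<longlonglongrightarrow> J)}"

text \<open>Block i (in R^L) of a vector in R^{LN}; indices are pairs (node i, component k).\<close>
definition blk :: "real^('n::finite \<times> 'l::finite) \<Rightarrow> 'n \<Rightarrow> real^'l" where
  "blk b i = (\<chi> k. b $ (i, k))"

definition dyad :: "real^'l::finite \<Rightarrow> real^'l \<Rightarrow> real^'l^'l" where
  "dyad x y = (\<chi> p q. x $ p * y $ q)"

definition vrho :: "real \<Rightarrow> real^('n::finite \<times> 'l::finite) \<Rightarrow> real^('n \<times> 'l) \<Rightarrow> 'n \<Rightarrow> real^'l" where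
  "vrho rho b c i = blk c i + rho *\<^sub>R blk b i"

definition Sblk :: "real \<Rightarrow> ('n::finite \<Rightarrow> real) \<Rightarrow> real^('n \<times> 'l::finite) \<Rightarrow> real^('n \<times> 'l) \<Rightarrow> 'n \<Rightarrow> real^'l" where
  "Sblk rho sig b c i =
     max (sig i) (norm (vrho rho b c i)) *\<^sub>R blk c i - sig i *\<^sub>R vrho rho b c i"

definition Ddiag :: "('n::finite \<Rightarrow> real) \<Rightarrow> real^('n \<times> 'l::finite) \<Rightarrow> real^('n \<times> 'l)" where
  "Ddiag Dn c = (\<chi> p. Dn (fst p) * c $ p)"

definition elastoF ::
  "real^'m::finite^'m \<Rightarrow> real^('n::finite \<times> 'l::finite)^'m \<Rightarrow> real^('n \<times> 'l)^('n \<times> 'l) \<Rightarrow> ('n \<Rightarrow> real) \<Rightarrow> real^'m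
   \<Rightarrow> ('n \<Rightarrow> real) \<Rightarrow> real
   \<Rightarrow> (real^'m) \<times> (real^('n \<times> 'l)) \<times> (real^('n \<times> 'l)) \<Rightarrow> (real^'m) \<times> (real^('n \<times> 'l)) \<times> (real^('n \<times> 'l))" where
  "elastoF A B C Dn l sig rho = (\<lambda>(a, b, c).
     (A *v a + B *v b + l,
      transpose B *v a + C *v b + Ddiag Dn c,
      (\<chi> p. Sblk rho sig b c (fst p) $ snd p)))"

end

theory Submission
  imports Defs
begin

text \<open>At a point where F is differentiable, the block S_i is smooth off the yield surface
  |v_i| = sigma_i, and its derivative has the stated form with tau_i = 1 if |v_i| > sigma_i and
  tau_i = 0 if |v_i| < sigma_i. On the yield surface the factor max(sigma_i, |v_i|) has a kink in
  the direction of v_i, which differentiability forces c_i = 0 to cancel; then the formula holds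
  for every tau_i. So every Jacobian near (a, b, c) is a map H_tau with admissible weights tau.
  The set of such maps at (a, b, c) is convex, because H_tau is affine in tau, and it contains
  all limits of such Jacobians: along a subsequence the weights converge in [0,1]^N, the strict
  inequalities |v_i| < sigma_i and |v_i| > sigma_i persist near the limit, and where
  |v_i| >= sigma_i > 0 the direction v_i/|v_i| depends continuously on the point. Hence the set
  contains the Clarke Jacobian.\<close>

type_synonym ('m, 'n, 'l) state = "(real^'m) \<times> (real^('n \<times> 'l)) \<times> (real^('n \<times> 'l))"

lemma blk_nth [simp]: "blk x i $ k = x $ (i, k)"
  by (simp add: blk_def)

lemma blk_zero [simp]: "blk 0 i = 0"
  by (simp add: vec_eq_iff)

lemma blk_add: "blk (x + y) i = blk x i + blk y i"
  by (simp add: vec_eq_iff)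

lemma blk_scaleR: "blk (t *\<^sub>R x) i = t *\<^sub>R blk x i"
  by (simp add: vec_eq_iff)

lemma bounded_linear_blk: "bounded_linear (\<lambda>x. blk x i)"
  by (rule bounded_linearI') (simp_all add: blk_add blk_scaleR)

lemmas tendsto_blk [tendsto_intros] = bounded_linear.tendsto[OF bounded_linear_blk]

lemma vrho_add_scaleR:
  "vrho rho (b + t *\<^sub>R db) (c + t *\<^sub>R dc) i = vrho rho b c i + t *\<^sub>R vrho rho db dc i"
  by (simp add: vrho_def blk_add blk_scaleR algebra_simps)

lemma tendsto_vrho [tendsto_intros]:
  "(X \<longlongrightarrow> b) F \<Longrightarrow> (Y \<longlongrightarrow> c) F \<Longrightarrow> ((\<lambda>k. vrho rho (X k) (Y k) i) \<longlongrightarrow> vrho rho b c i) F"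
  unfolding vrho_def by (intro tendsto_intros)

lemma dyad_mult_vector: "dyad x y *v w = (y \<bullet> w) *\<^sub>R x"
  by (simp add: vec_eq_iff matrix_vector_mult_def dyad_def inner_vec_def sum_distrib_left mult_ac)

lemma bounded_linear_Ddiag: "bounded_linear (Ddiag Dn)"
  by (rule bounded_linearI') (simp_all add: Ddiag_def vec_eq_iff distrib_left mult.left_commute)

lemma has_vector_derivative_along_line:
  assumes "(f has_derivative f') (at x)"
  shows "((\<lambda>t. f (x + t *\<^sub>R h)) has_vector_derivative f' h) (at 0)"
proof -
  interpret f': bounded_linear f'
    using has_derivative_bounded_linear[OF assms] .
  have "((\<lambda>t. x + t *\<^sub>R h) has_derivative (\<lambda>t. t *\<^sub>R h)) (at 0)"
    by (auto intro!: derivative_eq_intros)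
  moreover have "(f has_derivative f') (at (x + 0 *\<^sub>R h))"
    using assms by simp
  ultimately have "((\<lambda>t. f (x + t *\<^sub>R h)) has_derivative (\<lambda>t. f' (t *\<^sub>R h))) (at 0)"
    by (rule has_derivative_compose)
  then show ?thesis
    by (simp add: has_vector_derivative_def f'.scale)
qed

lemma has_derivative_max_norm:
  fixes v :: "'a::real_inner"
  assumes "0 \<le> s" and "norm v \<noteq> s"
  shows "((\<lambda>x. max s (norm x)) has_derivative (\<lambda>h. if s < norm v then h \<bullet> sgn v else 0)) (at v)"
proof (cases "s < norm v")
  case True
  have "(norm has_derivative (\<lambda>h. h \<bullet> sgn v)) (at v)"
    using True assms(1) by (intro has_derivative_norm) auto
  moreover have "open {x. s < norm x}"
    by (intro open_Collect_less continuous_intros)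
  ultimately have "((\<lambda>x. max s (norm x)) has_derivative (\<lambda>h. h \<bullet> sgn v)) (at v)"
    by (rule has_derivative_transform_within_open) (use True in auto)
  with True show ?thesis
    by simp
next
  case False
  have "open {x. norm x < s}"
    by (intro open_Collect_less continuous_intros)
  then have "((\<lambda>x. max s (norm x)) has_derivative (\<lambda>h. 0)) (at v)"
    by (rule has_derivative_transform_within_open[OF has_derivative_const]) (use False assms(2) in auto)
  with False show ?thesis
    by simp
qed

lemma pos_part_mult_has_derivative_imp_zero:
  fixes f :: "real \<Rightarrow> real"
  assumes "((\<lambda>t. max 0 t * f t) has_real_derivative D) (at 0)" and "isCont f 0"
  shows "f 0 = 0"
proof -
  let ?q = "\<lambda>t. max 0 t * f t / t"
  have "(?q \<longlongrightarrow> D) (at 0)"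
    using assms(1) by (simp add: has_field_derivative_iff)
  then have "(?q \<longlongrightarrow> D) (at_right 0)" and "(?q \<longlongrightarrow> D) (at_left 0)"
    by (simp_all add: filterlim_at_split)
  moreover have "(?q \<longlongrightarrow> f 0) (at_right 0)"
  proof (rule Lim_transform_eventually)
    show "(f \<longlongrightarrow> f 0) (at_right 0)"
      using assms(2) by (simp add: isCont_def filterlim_at_split)
    show "\<forall>\<^sub>F t in at_right 0. f t = ?q t"
      by (rule eventually_mono[OF eventually_at_right_less]) simp
  qed
  moreover have "(?q \<longlongrightarrow> 0) (at_left 0)"
    by (rule Lim_transform_eventually[OF tendsto_const]) (simp add: eventually_at_filter)
  ultimately have "D = f 0" and "D = 0"
    by (auto intro: tendsto_unique[OF trivial_limit_at_right_real]
        tendsto_unique[OF trivial_limit_at_left_real])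
  then show ?thesis
    by simp
qed

lemma unit_cube_seq_has_convergent_subseq:
  fixes T :: "nat \<Rightarrow> 'n::finite \<Rightarrow> real"
  assumes "\<And>k i. 0 \<le> T k i \<and> T k i \<le> 1"
  obtains r tau where "strict_mono r" and "\<And>i. (\<lambda>k. T (r k) i) \<longlonglongrightarrow> tau i"
proof -
  define tv :: "nat \<Rightarrow> real^'n" where "tv k = (\<chi> i. T k i)" for k
  have "tv k \<in> cbox 0 1" for k
    using assms by (simp add: tv_def mem_box_cart)
  then obtain lv r where r: "strict_mono r" and lim: "(tv \<circ> r) \<longlonglongrightarrow> lv"
    using compact_imp_seq_compact[OF compact_cbox] unfolding seq_compact_def by metis
  have "(\<lambda>k. T (r k) i) \<longlonglongrightarrow> lv $ i" for i
    using tendsto_vec_nth[OF lim, of i] by (simp add: tv_def o_def)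
  with r show thesis
    by (rule that)
qed

definition yield_ind :: "real \<Rightarrow> ('n::finite \<Rightarrow> real) \<Rightarrow> real^('n \<times> 'l::finite) \<Rightarrow> real^('n \<times> 'l) \<Rightarrow> 'n \<Rightarrow> real"
  where "yield_ind rho sig b c i = (if sig i < norm (vrho rho b c i) then 1 else 0)"

definition admissible_tau ::
  "real \<Rightarrow> ('n::finite \<Rightarrow> real) \<Rightarrow> real^('n \<times> 'l::finite) \<Rightarrow> real^('n \<times> 'l) \<Rightarrow> ('n \<Rightarrow> real) \<Rightarrow> bool"
  where "admissible_tau rho sig b c tau \<longleftrightarrow> (\<forall>i. 0 \<le> tau i \<and> tau i \<le> 1
    \<and> (norm (vrho rho b c i) < sig i \<longrightarrow> tau i = 0)
    \<and> (sig i < norm (vrho rho b c i) \<longrightarrow> tau i = 1))"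

text \<open>The block row (X_i, Y_i) of H applied to (db, dc), written with sgn v_i for v_i/|v_i|.\<close>

definition dSblk :: "real \<Rightarrow> ('n::finite \<Rightarrow> real) \<Rightarrow> ('n \<Rightarrow> real) \<Rightarrow> real^('n \<times> 'l::finite) \<Rightarrow> real^('n \<times> 'l)
    \<Rightarrow> real^('n \<times> 'l) \<Rightarrow> real^('n \<times> 'l) \<Rightarrow> 'n \<Rightarrow> real^'l"
  where "dSblk rho sig tau b c db dc i =
    tau i *\<^sub>R ((sgn (vrho rho b c i) \<bullet> vrho rho db dc i) *\<^sub>R blk c i
      + (norm (vrho rho b c i) - sig i) *\<^sub>R blk dc i) - (rho * sig i) *\<^sub>R blk db i"

definition elastoH :: "real^'m::finite^'m \<Rightarrow> real^('n::finite \<times> 'l::finite)^'m \<Rightarrow> real^('n \<times> 'l)^('n \<times> 'l)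
    \<Rightarrow> ('n \<Rightarrow> real) \<Rightarrow> ('n \<Rightarrow> real) \<Rightarrow> real \<Rightarrow> ('n \<Rightarrow> real) \<Rightarrow> real^('n \<times> 'l) \<Rightarrow> real^('n \<times> 'l)
    \<Rightarrow> ('m, 'n, 'l) state \<Rightarrow> ('m, 'n, 'l) state"
  where "elastoH A B C Dn sig rho tau b c = (\<lambda>(da, db, dc).
    (A *v da + B *v db,
     transpose B *v da + C *v db + Ddiag Dn dc,
     (\<chi> p. dSblk rho sig tau b c db dc (fst p) $ snd p)))"

definition elastoH_set :: "real^'m::finite^'m \<Rightarrow> real^('n::finite \<times> 'l::finite)^'m \<Rightarrow> real^('n \<times> 'l)^('n \<times> 'l)
    \<Rightarrow> ('n \<Rightarrow> real) \<Rightarrow> ('n \<Rightarrow> real) \<Rightarrow> real \<Rightarrow> real^('n \<times> 'l) \<Rightarrow> real^('n \<times> 'l)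
    \<Rightarrow> (('m, 'n, 'l) state \<Rightarrow>\<^sub>L ('m, 'n, 'l) state) set"
  where "elastoH_set A B C Dn sig rho b c =
    {H. \<exists>tau. admissible_tau rho sig b c tau \<and> blinfun_apply H = elastoH A B C Dn sig rho tau b c}"

lemma admissible_yield_ind: "admissible_tau rho sig b c (yield_ind rho sig b c)"
  by (simp add: admissible_tau_def yield_ind_def)

lemma dSblk_matrix_form:
  "dSblk rho sig tau b c db dc i =
     ((tau i * rho) *\<^sub>R dyad (blk c i) ((1 / norm (vrho rho b c i)) *\<^sub>R vrho rho b c i)
        - (rho * sig i) *\<^sub>R mat 1) *v blk db i
   + (tau i *\<^sub>R (dyad (blk c i) ((1 / norm (vrho rho b c i)) *\<^sub>R vrho rho b c i)
        + (norm (vrho rho b c i) - sig i) *\<^sub>R mat 1)) *v blk dc i"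
proof -
  define v u where "v = vrho rho b c i" and "u = (1 / norm (vrho rho b c i)) *\<^sub>R vrho rho b c i"
  have "u = sgn v"
    by (simp add: u_def v_def sgn_div_norm divide_inverse)
  have "((tau i * rho) *\<^sub>R dyad (blk c i) u - (rho * sig i) *\<^sub>R mat 1) *v blk db i
      + (tau i *\<^sub>R (dyad (blk c i) u + (norm v - sig i) *\<^sub>R mat 1)) *v blk dc i
    = (tau i * rho) *\<^sub>R ((u \<bullet> blk db i) *\<^sub>R blk c i) - (rho * sig i) *\<^sub>R blk db i
      + tau i *\<^sub>R ((u \<bullet> blk dc i) *\<^sub>R blk c i + (norm v - sig i) *\<^sub>R blk dc i)"
    by (simp only: matrix_vector_mult_diff_rdistrib matrix_vector_mult_add_rdistrib
        scaleR_matrix_vector_assoc[symmetric] dyad_mult_vector matrix_vector_mul_lid)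
  also have "\<dots> = dSblk rho sig tau b c db dc i"
    unfolding dSblk_def v_def[symmetric] \<open>u = sgn v\<close> vrho_def[of rho db dc]
    by (simp add: inner_add_right algebra_simps)
  finally show ?thesis
    by (simp add: u_def v_def)
qed


lemma Sblk_along_line:
  "Sblk rho sig (b + t *\<^sub>R db) (c + t *\<^sub>R dc) i =
     max (sig i) (norm (vrho rho b c i + t *\<^sub>R vrho rho db dc i)) *\<^sub>R (blk c i + t *\<^sub>R blk dc i)
     - sig i *\<^sub>R (vrho rho b c i + t *\<^sub>R vrho rho db dc i)"
  by (simp add: Sblk_def vrho_add_scaleR blk_add blk_scaleR)

lemma Sblk_along_line_has_derivative_off_yield:
  assumes "0 \<le> sig i" and "norm (vrho rho b c i) \<noteq> sig i"
  shows "((\<lambda>t. Sblk rho sig (b + t *\<^sub>R db) (c + t *\<^sub>R dc) i $ k) has_real_derivative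
           dSblk rho sig (yield_ind rho sig b c) b c db dc i $ k) (at 0)"
proof -
  define v w where "v = vrho rho b c i" and "w = vrho rho db dc i"
  define m' where "m' = (if sig i < norm v then w \<bullet> sgn v else 0)"
  have line: "((\<lambda>t. v + t *\<^sub>R w) has_derivative (\<lambda>t. t *\<^sub>R w)) (at 0)"
    by (auto intro!: derivative_eq_intros)
  have "0 \<le> sig i" and "norm v \<noteq> sig i"
    using assms by (simp_all add: v_def)
  then have "((\<lambda>x. max (sig i) (norm x)) has_derivative (\<lambda>h. if sig i < norm v then h \<bullet> sgn v else 0))
      (at (v + 0 *\<^sub>R w))"
    by (simp add: has_derivative_max_norm)
  from has_derivative_compose[OF line this]
  have "((\<lambda>t. max (sig i) (norm (v + t *\<^sub>R w))) has_derivative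
      (\<lambda>t. if sig i < norm v then (t *\<^sub>R w) \<bullet> sgn v else 0)) (at 0)"
    by simp
  moreover have "(\<lambda>t. if sig i < norm v then (t *\<^sub>R w) \<bullet> sgn v else 0) = (*) m'"
    by (simp add: m'_def fun_eq_iff)
  ultimately have m: "((\<lambda>t. max (sig i) (norm (v + t *\<^sub>R w))) has_real_derivative m') (at 0)"
    by (simp add: has_field_derivative_def)
  have "((\<lambda>t. max (sig i) (norm (v + t *\<^sub>R w)) * (c $ (i, k) + t * dc $ (i, k))
          - sig i * (v $ k + t * w $ k)) has_real_derivative
        m' * c $ (i, k) + max (sig i) (norm v) * dc $ (i, k) - sig i * w $ k) (at 0)"
    by (auto intro!: derivative_eq_intros m)
  moreover have "m' * c $ (i, k) + max (sig i) (norm v) * dc $ (i, k) - sig i * w $ k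
      = dSblk rho sig (yield_ind rho sig b c) b c db dc i $ k"
    using assms(2)
    by (auto simp: m'_def dSblk_def yield_ind_def v_def w_def vrho_def inner_commute algebra_simps)
  ultimately show ?thesis
    by (simp add: Sblk_along_line v_def w_def)
qed

text \<open>With c_(i,k) = 0 the kinked factor max(sigma_i, |v_i + t w|) is multiplied by t, so the
  difference quotient is continuous at 0 (Caratheodory).\<close>

lemma Sblk_along_line_has_derivative_at_yield:
  assumes "norm (vrho rho b c i) = sig i" and "c $ (i, k) = 0"
  shows "((\<lambda>t. Sblk rho sig (b + t *\<^sub>R db) (c + t *\<^sub>R dc) i $ k) has_real_derivative
           dSblk rho sig tau b c db dc i $ k) (at 0)"
proof -
  define v w where "v = vrho rho b c i" and "w = vrho rho db dc i"
  define g where "g t = max (sig i) (norm (v + t *\<^sub>R w)) * dc $ (i, k) - sig i * w $ k" for t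
  have "((\<lambda>t. Sblk rho sig (b + t *\<^sub>R db) (c + t *\<^sub>R dc) i $ k) has_real_derivative g 0) (at 0)"
    unfolding CARAT_DERIV
  proof (intro exI conjI allI)
    fix t
    show "Sblk rho sig (b + t *\<^sub>R db) (c + t *\<^sub>R dc) i $ k - Sblk rho sig (b + 0 *\<^sub>R db) (c + 0 *\<^sub>R dc) i $ k
        = g t * (t - 0)"
      using assms unfolding Sblk_along_line g_def v_def w_def by (simp add: algebra_simps)
    show "isCont g 0"
      unfolding g_def by (intro continuous_intros)
  qed simp
  moreover have "g 0 = dSblk rho sig tau b c db dc i $ k"
    using assms by (simp add: g_def dSblk_def v_def w_def vrho_def algebra_simps)
  ultimately show ?thesis
    by simp
qed

text \<open>Along the direction v_i of the c-block, max(sigma_i, |(1 + t) v_i|) = sigma_i (1 + max 0 t)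
  near t = 0.\<close>

lemma Sblk_has_derivative_at_yield_imp_zero:
  assumes "0 < sig i" and "norm (vrho rho b c i) = sig i" and "blk h i = vrho rho b c i"
    and "((\<lambda>t. Sblk rho sig b (c + t *\<^sub>R h) i $ k) has_real_derivative D) (at 0)"
  shows "c $ (i, k) = 0"
proof -
  define v where "v = vrho rho b c i"
  define f where "f t = sig i * (c $ (i, k) + t * v $ k)" for t
  define r where "r t = f t - sig i * ((1 + t) * v $ k)" for t
  have "Sblk rho sig b (c + t *\<^sub>R h) i $ k = max 0 t * f t + r t" if "-1 < t" for t
  proof -
    have "norm (v + t *\<^sub>R v) = (1 + t) * sig i"
      using norm_scaleR[of "1 + t" v] that assms(2) by (simp add: v_def algebra_simps)
    then have "max (sig i) (norm (v + t *\<^sub>R v)) = sig i + max 0 t * sig i"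
      using assms(1) by (auto simp: max_def algebra_simps mult_le_cancel_right1 zero_le_mult_iff)
    moreover have "vrho rho 0 h i = v"
      by (simp add: vrho_def assms(3) v_def)
    ultimately have "Sblk rho sig b (c + t *\<^sub>R h) i
        = (sig i + max 0 t * sig i) *\<^sub>R (blk c i + t *\<^sub>R v) - sig i *\<^sub>R (v + t *\<^sub>R v)"
      using Sblk_along_line[of rho sig b t 0 c h i] assms(3) by (simp add: v_def)
    then have "Sblk rho sig b (c + t *\<^sub>R h) i $ k
        = ((sig i + max 0 t * sig i) *\<^sub>R (blk c i + t *\<^sub>R v) - sig i *\<^sub>R (v + t *\<^sub>R v)) $ k"
      by (rule arg_cong)
    also have "\<dots> = max 0 t * f t + r t"
      by (simp add: f_def r_def algebra_simps)
    finally show ?thesis .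
  qed
  moreover have "\<forall>\<^sub>F t in nhds 0. -1 < (t::real)"
    using eventually_nhds_in_open[of "{-1::real<..}" 0] by simp
  ultimately have "\<forall>\<^sub>F t in nhds 0. Sblk rho sig b (c + t *\<^sub>R h) i $ k = max 0 t * f t + r t"
    by (auto elim: eventually_mono)
  then have "((\<lambda>t. max 0 t * f t + r t) has_real_derivative D) (at 0)"
    using assms(4) by (simp add: DERIV_cong_ev)
  moreover have "(r has_real_derivative 0) (at 0)"
    unfolding r_def f_def by (auto intro!: derivative_eq_intros)
  ultimately have "((\<lambda>t. max 0 t * f t) has_real_derivative D - 0) (at 0)"
    using DERIV_diff by fastforce
  then have "f 0 = 0"
    by (rule pos_part_mult_has_derivative_imp_zero) (simp add: f_def)
  then show ?thesis
    using assms(1) by (simp add: f_def)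
qed

lemma elastoF_has_derivative_along_line:
  fixes b c :: "real^('n::finite \<times> 'l::finite)" and a :: "real^'m::finite"
  assumes "(elastoF A B C Dn l sig rho has_derivative F') (at (a, b, c))"
    and "bounded_linear (g :: ('m, 'n, 'l) state \<Rightarrow> 'v::real_normed_vector)"
  shows "((\<lambda>t. g (elastoF A B C Dn l sig rho ((a, b, c) + t *\<^sub>R h))) has_vector_derivative g (F' h)) (at 0)"
  using bounded_linear.has_vector_derivative[OF assms(2) has_vector_derivative_along_line[OF assms(1)]] .

lemma elastoF_has_derivative_Sblk_along_line:
  fixes b c :: "real^('n::finite \<times> 'l::finite)" and a :: "real^'m::finite"
  assumes "(elastoF A B C Dn l sig rho has_derivative F') (at (a, b, c))"
  shows "((\<lambda>t. Sblk rho sig (b + t *\<^sub>R db) (c + t *\<^sub>R dc) i $ k) has_real_derivative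
           snd (snd (F' (da, db, dc))) $ (i, k)) (at 0)"
proof -
  have "bounded_linear (\<lambda>y::('m, 'n, 'l) state. snd (snd y) $ (i, k))"
    by (intro bounded_linear_compose[OF bounded_linear_vec_nth]
        bounded_linear_compose[OF bounded_linear_snd] bounded_linear_snd)
  from elastoF_has_derivative_along_line[OF assms this, of "(da, db, dc)"] show ?thesis
    by (simp add: elastoF_def has_real_derivative_iff_has_vector_derivative)
qed

lemma elastoF_has_derivative_at_yield_imp_zero:
  fixes b c :: "real^('n::finite \<times> 'l::finite)" and a :: "real^'m::finite"
  assumes "0 < sig i" and "norm (vrho rho b c i) = sig i"
    and "(elastoF A B C Dn l sig rho has_derivative F') (at (a, b, c))"
  shows "c $ (i, k) = 0"
proof -
  define h where "h = (\<chi> p. if fst p = i then vrho rho b c i $ snd p else 0)"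
  have "blk h i = vrho rho b c i"
    by (simp add: h_def vec_eq_iff)
  moreover have "((\<lambda>t. Sblk rho sig b (c + t *\<^sub>R h) i $ k) has_real_derivative
      snd (snd (F' (0, 0, h))) $ (i, k)) (at 0)"
    using elastoF_has_derivative_Sblk_along_line[OF assms(3), of 0 h i k 0] by simp
  ultimately show ?thesis
    using assms(1,2) Sblk_has_derivative_at_yield_imp_zero by blast
qed

lemma elastoF_has_derivative_affine_components:
  fixes b c :: "real^('n::finite \<times> 'l::finite)" and a :: "real^'m::finite"
  assumes "(elastoF A B C Dn l sig rho has_derivative F') (at (a, b, c))"
  shows "fst (F' (da, db, dc)) = A *v da + B *v db"
    and "fst (snd (F' (da, db, dc))) = transpose B *v da + C *v db + Ddiag Dn dc"
proof -
  let ?h = "(da, db, dc)"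
  have line: "((\<lambda>t. g (elastoF A B C Dn l sig rho ((a, b, c) + t *\<^sub>R ?h))) has_vector_derivative g (F' ?h)) (at 0)"
    if "bounded_linear g" for g :: "('m, 'n, 'l) state \<Rightarrow> 'v::real_normed_vector"
    using elastoF_has_derivative_along_line[OF assms that] .
  have "((\<lambda>t. fst (elastoF A B C Dn l sig rho ((a, b, c) + t *\<^sub>R ?h))) has_vector_derivative
      A *v da + B *v db) (at 0)"
    unfolding has_vector_derivative_def
    by (auto simp: elastoF_def algebra_simps intro!: derivative_eq_intros
        bounded_linear.has_derivative[OF matrix_vector_mul_bounded_linear])
  with line[OF bounded_linear_fst] show "fst (F' ?h) = A *v da + B *v db"
    using vector_derivative_unique_at by blast
  have "((\<lambda>t. fst (snd (elastoF A B C Dn l sig rho ((a, b, c) + t *\<^sub>R ?h)))) has_vector_derivative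
      transpose B *v da + C *v db + Ddiag Dn dc) (at 0)"
    unfolding has_vector_derivative_def
    by (auto simp: elastoF_def algebra_simps linear.scaleR[OF bounded_linear.linear[OF bounded_linear_Ddiag]]
        simp del: transpose_matrix_vector intro!: derivative_eq_intros
        bounded_linear.has_derivative[OF matrix_vector_mul_bounded_linear]
        bounded_linear.has_derivative[OF bounded_linear_Ddiag])
  moreover have "bounded_linear (\<lambda>y::('m, 'n, 'l) state. fst (snd y))"
    by (intro bounded_linear_compose[OF bounded_linear_fst] bounded_linear_snd)
  ultimately show "fst (snd (F' ?h)) = transpose B *v da + C *v db + Ddiag Dn dc"
    using vector_derivative_unique_at line by blast
qed

lemma elastoF_has_derivative_imp_eq_elastoH:
  fixes b c :: "real^('n::finite \<times> 'l::finite)" and a :: "real^'m::finite"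
  assumes "\<And>i. 0 < sig i" and "(elastoF A B C Dn l sig rho has_derivative F') (at (a, b, c))"
  shows "F' = elastoH A B C Dn sig rho (yield_ind rho sig b c) b c"
proof
  fix h :: "('m, 'n, 'l) state"
  obtain da db dc where h: "h = (da, db, dc)"
    by (cases h)
  have "snd (snd (F' h)) $ (i, k) = dSblk rho sig (yield_ind rho sig b c) b c db dc i $ k" for i k
  proof (rule DERIV_unique)
    show "((\<lambda>t. Sblk rho sig (b + t *\<^sub>R db) (c + t *\<^sub>R dc) i $ k) has_real_derivative
        snd (snd (F' h)) $ (i, k)) (at 0)"
      unfolding h by (rule elastoF_has_derivative_Sblk_along_line[OF assms(2)])
    show "((\<lambda>t. Sblk rho sig (b + t *\<^sub>R db) (c + t *\<^sub>R dc) i $ k) has_real_derivative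
        dSblk rho sig (yield_ind rho sig b c) b c db dc i $ k) (at 0)"
    proof (cases "norm (vrho rho b c i) = sig i")
      case True
      with elastoF_has_derivative_at_yield_imp_zero[OF assms(1) True assms(2)] show ?thesis
        by (intro Sblk_along_line_has_derivative_at_yield)
    next
      case False
      with assms(1)[of i] show ?thesis
        by (intro Sblk_along_line_has_derivative_off_yield) auto
    qed
  qed
  then show "F' h = elastoH A B C Dn sig rho (yield_ind rho sig b c) b c h"
    by (simp add: h elastoH_def prod_eq_iff vec_eq_iff elastoF_has_derivative_affine_components[OF assms(2)])
qed

lemma admissible_tau_convex_comb:
  assumes "admissible_tau rho sig b c t1" and "admissible_tau rho sig b c t2" and "0 \<le> u" and "u \<le> 1"
  shows "admissible_tau rho sig b c (\<lambda>i. (1 - u) * t1 i + u * t2 i)"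
  unfolding admissible_tau_def
proof (intro allI conjI impI)
  fix i
  have t: "0 \<le> t1 i" "t1 i \<le> 1" "0 \<le> t2 i" "t2 i \<le> 1"
    using assms(1,2) by (auto simp: admissible_tau_def)
  show "0 \<le> (1 - u) * t1 i + u * t2 i"
    using t assms(3,4) by simp
  show "(1 - u) * t1 i + u * t2 i \<le> 1"
    using t assms(3,4) convex_bound_le[of "t1 i" 1 "t2 i" "1 - u" u] by simp
  show "(1 - u) * t1 i + u * t2 i = 0" if "norm (vrho rho b c i) < sig i"
    using that assms(1,2) by (simp add: admissible_tau_def)
  show "(1 - u) * t1 i + u * t2 i = 1" if "sig i < norm (vrho rho b c i)"
    using that assms(1,2) by (simp add: admissible_tau_def algebra_simps)
qed

lemma elastoH_convex_comb:
  "elastoH A B C Dn sig rho (\<lambda>i. (1 - u) * t1 i + u * t2 i) b c (da, db, dc)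
   = (1 - u) *\<^sub>R elastoH A B C Dn sig rho t1 b c (da, db, dc)
     + u *\<^sub>R elastoH A B C Dn sig rho t2 b c (da, db, dc)"
  by (simp add: elastoH_def dSblk_def vec_eq_iff algebra_simps)

lemma convex_elastoH_set: "convex (elastoH_set A B C Dn sig rho b c)"
  unfolding convex_alt
proof (intro ballI allI impI)
  fix H1 H2 and u :: real
  assume "H1 \<in> elastoH_set A B C Dn sig rho b c" and "H2 \<in> elastoH_set A B C Dn sig rho b c"
    and u: "0 \<le> u \<and> u \<le> 1"
  then obtain t1 t2 where "admissible_tau rho sig b c t1" "blinfun_apply H1 = elastoH A B C Dn sig rho t1 b c"
    and "admissible_tau rho sig b c t2" "blinfun_apply H2 = elastoH A B C Dn sig rho t2 b c"
    by (auto simp: elastoH_set_def)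
  with u show "(1 - u) *\<^sub>R H1 + u *\<^sub>R H2 \<in> elastoH_set A B C Dn sig rho b c"
    unfolding elastoH_set_def
    by (auto intro!: exI[of _ "\<lambda>i. (1 - u) * t1 i + u * t2 i"] admissible_tau_convex_comb
        simp: fun_eq_iff elastoH_convex_comb blinfun.add_left blinfun.scaleR_left)
qed

lemma admissible_tau_eventually_elastic:
  assumes "(bs \<longlongrightarrow> b) F" and "(cs \<longlongrightarrow> c) F" and "\<forall>\<^sub>F k in F. admissible_tau rho sig (bs k) (cs k) (T k)"
    and "norm (vrho rho b c i) < sig i"
  shows "\<forall>\<^sub>F k in F. T k i = 0"
  using order_tendstoD(2)[OF tendsto_norm[OF tendsto_vrho[OF assms(1,2)]] assms(4)] assms(3)
  by eventually_elim (simp add: admissible_tau_def)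

lemma admissible_tau_eventually_plastic:
  assumes "(bs \<longlongrightarrow> b) F" and "(cs \<longlongrightarrow> c) F" and "\<forall>\<^sub>F k in F. admissible_tau rho sig (bs k) (cs k) (T k)"
    and "sig i < norm (vrho rho b c i)"
  shows "\<forall>\<^sub>F k in F. T k i = 1"
  using order_tendstoD(1)[OF tendsto_norm[OF tendsto_vrho[OF assms(1,2)]] assms(4)] assms(3)
  by eventually_elim (simp add: admissible_tau_def)

lemma admissible_tau_limit:
  assumes "F \<noteq> bot" and "(bs \<longlongrightarrow> b) F" and "(cs \<longlongrightarrow> c) F"
    and "\<forall>\<^sub>F k in F. admissible_tau rho sig (bs k) (cs k) (T k)"
    and "\<And>i. ((\<lambda>k. T k i) \<longlongrightarrow> tau i) F"
  shows "admissible_tau rho sig b c tau"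
  unfolding admissible_tau_def
proof (intro allI conjI impI)
  fix i
  show "0 \<le> tau i"
    using assms(4) by (intro tendsto_lowerbound[OF assms(5) _ assms(1)])
      (auto simp: admissible_tau_def elim: eventually_mono)
  show "tau i \<le> 1"
    using assms(4) by (intro tendsto_upperbound[OF assms(5) _ assms(1)])
      (auto simp: admissible_tau_def elim: eventually_mono)
  show "tau i = 0" if "norm (vrho rho b c i) < sig i"
    using admissible_tau_eventually_elastic[OF assms(2-4) that]
    by (intro tendsto_unique[OF assms(1) assms(5)]) (simp add: tendsto_eventually)
  show "tau i = 1" if "sig i < norm (vrho rho b c i)"
    using admissible_tau_eventually_plastic[OF assms(2-4) that]
    by (intro tendsto_unique[OF assms(1) assms(5)]) (simp add: tendsto_eventually)
qed

lemma tendsto_elastoH: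
  assumes "\<And>i. 0 < sig i" and "(bs \<longlongrightarrow> b) F" and "(cs \<longlongrightarrow> c) F"
    and "\<forall>\<^sub>F k in F. admissible_tau rho sig (bs k) (cs k) (T k)"
    and "\<And>i. ((\<lambda>k. T k i) \<longlongrightarrow> tau i) F" and "admissible_tau rho sig b c tau"
  shows "((\<lambda>k. elastoH A B C Dn sig rho (T k) (bs k) (cs k) x) \<longlongrightarrow> elastoH A B C Dn sig rho tau b c x) F"
proof -
  obtain da db dc where x: "x = (da, db, dc)"
    by (cases x)
  have "((\<lambda>k. dSblk rho sig (T k) (bs k) (cs k) db dc i) \<longlongrightarrow> dSblk rho sig tau b c db dc i) F" for i
  proof (cases "norm (vrho rho b c i) < sig i")
    case True
    with admissible_tau_eventually_elastic[OF assms(2-4) True] assms(6)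
    have "\<forall>\<^sub>F k in F. dSblk rho sig (T k) (bs k) (cs k) db dc i = dSblk rho sig tau b c db dc i"
      by (auto simp: dSblk_def admissible_tau_def elim: eventually_mono)
    then show ?thesis
      by (rule tendsto_eventually)
  next
    case False
    with assms(1)[of i] have "vrho rho b c i \<noteq> 0"
      by auto
    with assms(2,3,5) show ?thesis
      unfolding dSblk_def by (intro tendsto_intros)
  qed
  then show ?thesis
    unfolding x elastoH_def by (auto intro!: tendsto_intros)
qed

lemma elastoF_jacobian_limit_in_elastoH_set:
  fixes b c :: "real^('n::finite \<times> 'l::finite)" and a :: "real^'m::finite"
  assumes "\<And>i. 0 < sig i" and "xs \<longlonglongrightarrow> (a, b, c)"
    and "\<And>k. (elastoF A B C Dn l sig rho has_derivative blinfun_apply (Js k)) (at (xs k))"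
    and "Js \<longlonglongrightarrow> J"
  shows "J \<in> elastoH_set A B C Dn sig rho b c"
proof -
  define bs cs where "bs k = fst (snd (xs k))" and "cs k = snd (snd (xs k))" for k
  define T where "T k = yield_ind rho sig (bs k) (cs k)" for k
  have Js: "blinfun_apply (Js k) = elastoH A B C Dn sig rho (T k) (bs k) (cs k)" for k
  proof -
    have "(elastoF A B C Dn l sig rho has_derivative blinfun_apply (Js k)) (at (fst (xs k), bs k, cs k))"
      using assms(3)[of k] by (simp add: bs_def cs_def)
    from elastoF_has_derivative_imp_eq_elastoH[OF assms(1) this] show ?thesis
      by (simp add: T_def)
  qed
  have "0 \<le> T k i \<and> T k i \<le> 1" for k i
    by (simp add: T_def yield_ind_def)
  then obtain r tau where r: "strict_mono r" and tau: "\<And>i. (\<lambda>k. T (r k) i) \<longlonglongrightarrow> tau i"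
    using unit_cube_seq_has_convergent_subseq[of T] by blast
  have "(\<lambda>k. xs (r k)) \<longlonglongrightarrow> (a, b, c)"
    using LIMSEQ_subseq_LIMSEQ[OF assms(2) r] by (simp add: o_def)
  then have bs: "(\<lambda>k. bs (r k)) \<longlonglongrightarrow> b" and cs: "(\<lambda>k. cs (r k)) \<longlonglongrightarrow> c"
    unfolding bs_def cs_def using tendsto_fst[OF tendsto_snd] tendsto_snd[OF tendsto_snd] by fastforce+
  have adm: "\<forall>\<^sub>F k in sequentially. admissible_tau rho sig (bs (r k)) (cs (r k)) (T (r k))"
    by (simp add: T_def admissible_yield_ind)
  have tau_adm: "admissible_tau rho sig b c tau"
    by (rule admissible_tau_limit[OF _ bs cs adm tau]) simp
  have "blinfun_apply J x = elastoH A B C Dn sig rho tau b c x" for x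
  proof (rule LIMSEQ_unique)
    show "(\<lambda>k. blinfun_apply (Js (r k)) x) \<longlonglongrightarrow> blinfun_apply J x"
      using LIMSEQ_subseq_LIMSEQ[OF assms(4) r] by (auto simp: o_def intro: tendsto_intros)
    show "(\<lambda>k. blinfun_apply (Js (r k)) x) \<longlonglongrightarrow> elastoH A B C Dn sig rho tau b c x"
      unfolding Js by (rule tendsto_elastoH[OF assms(1) bs cs adm tau tau_adm])
  qed
  then have "blinfun_apply J = elastoH A B C Dn sig rho tau b c"
    by (rule ext)
  with tau_adm show ?thesis
    unfolding elastoH_set_def by (intro CollectI exI[of _ tau] conjI)
qed

theorem lemma4p1:
  fixes A :: "real^'m::finite^'m" and B :: "real^('n::finite \<times> 'l::finite)^'m" and C :: "real^('n \<times> 'l)^('n \<times> 'l)"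
    and Dn :: "'n \<Rightarrow> real" and l :: "real^'m" and sig :: "'n \<Rightarrow> real" and rho :: real
    and a :: "real^'m" and b c :: "real^('n \<times> 'l)"
    and H :: "((real^'m) \<times> (real^('n \<times> 'l)) \<times> (real^('n \<times> 'l))) \<Rightarrow>\<^sub>L ((real^'m) \<times> (real^('n \<times> 'l)) \<times> (real^('n \<times> 'l)))"
  assumes rho_pos: "rho > 0"
    and sigma_pos: "\<And>i. sig i > 0"
    and D_pos: "\<And>i. Dn i > 0"
    and H: "H \<in> clarke_jacobian (elastoF A B C Dn l sig rho) (a, b, c)"
  shows "\<exists>tau :: 'n \<Rightarrow> real.
     (\<forall>i. 0 \<le> tau i \<and> tau i \<le> 1
        \<and> (norm (vrho rho b c i) < sig i \<longrightarrow> tau i = 0)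
        \<and> (norm (vrho rho b c i) > sig i \<longrightarrow> tau i = 1)) \<and>
     (\<forall>da db dc. blinfun_apply H (da, db, dc) =
        (A *v da + B *v db,
         transpose B *v da + C *v db + Ddiag Dn dc,
         (\<chi> p. let i = fst p; k = snd p in
            (((tau i * rho) *\<^sub>R dyad (blk c i) ((1 / norm (vrho rho b c i)) *\<^sub>R vrho rho b c i)
               - (rho * sig i) *\<^sub>R mat 1) *v blk db i) $ k
          + ((tau i *\<^sub>R (dyad (blk c i) ((1 / norm (vrho rho b c i)) *\<^sub>R vrho rho b c i)
               + (norm (vrho rho b c i) - sig i) *\<^sub>R mat 1)) *v blk dc i) $ k)))"
proof -
  have "{J. \<exists>xs Js. (xs \<longlonglongrightarrow> (a, b, c)) \<and>
          (\<forall>k. (elastoF A B C Dn l sig rho has_derivative blinfun_apply (Js k)) (at (xs k))) \<and>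
          (Js \<longlonglongrightarrow> J)} \<subseteq> elastoH_set A B C Dn sig rho b c"
    using elastoF_jacobian_limit_in_elastoH_set[where sig = sig, OF sigma_pos] by blast
  then have "H \<in> elastoH_set A B C Dn sig rho b c"
    using H convex_elastoH_set hull_minimal unfolding clarke_jacobian_def by blast
  then obtain tau where adm: "admissible_tau rho sig b c tau"
    and H_eq: "blinfun_apply H = elastoH A B C Dn sig rho tau b c"
    unfolding elastoH_set_def by blast
  show ?thesis
    by (rule exI[of _ tau], rule conjI[OF adm[unfolded admissible_tau_def]])
      (simp only: H_eq elastoH_def dSblk_matrix_form prod.case Let_def vector_add_component simp_thms)
qed

end
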